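(* 1. Let $a\in(0,1/2)$. For $v>v_0=(2-a)/a$ we have $T_0(v,a)<+\infty$, and moreover $T_0(v,a)\to\max(\sqrt2(1-2a),0)$ as $v\to+\infty$. 2. If $v\in\bigcup_{(p,q)\in\mathbb{N}\times\mathbb{N}}\sqrt{p^2+q^2}\,\mathbb{Q}$, then there exists $a_0>0$ such that $T_0(v,a)=+\infty$ for all $a\in(0,a_0)$.
   Context: $\Omega=(0,1)^2\subset\mathbb{R}^2$ (Euclidean), wave equation with Dirichlet boundary condition. For $a\in(0,1)$ and $v\ge0$, let $t\mapsto(x(t),y(t))$ be the path starting at $(0,0)$ at $t=0$ and moving anticlockwise along the boundary of $[0,1]^2$ with constant speed $v$. Set $\tilde\omega(t)=(x(t)-a,x(t)+a)\times(y(t)-a,y(t)+a)$, $\omega(t)=\tilde\omega(t)\cap[0,1]^2$, $Q=\{(t,z):z\in\omega(t)\}$. Let $\tau(s)$ denote the distance from $s\in\mathbb{R}$ to $2\mathbb{Z}$ (the 2-periodic triangle wave with values in $[0,1]$). Rays are the curves $t\mapsto(\tau(x_0+(t-t_0)\cos\alpha),\ \tau(y_0+(t-t_0)\sin\alpha))$, $t\in\mathbb{R}$, for $(x_0,y_0)\in[0,1]^2$, $t_0\in\mathbb{R}$, $\alpha\in(-\pi,\pi]$ (unit-speed billiard trajectories in the square). $(Q,T)$ satisfies the time-dependent geometric control condition if every ray $z(\cdot)$ admits $t\in(0,T)$ with $z(t)\in\omega(t)$; $T_0(v,a)$ is the infimum of such $T>0$, $+\infty$ if none. *)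

theory Defs
  imports "HOL-Analysis.Analysis"
begin

text \<open>Point at arclength s along the boundary of [0,1]^2, starting at (0,0), anticlockwise
  (perimeter 4, taken periodically).\<close>
definition bdry_point :: "real \<Rightarrow> real \<times> real" where
  "bdry_point s = (let r = s - 4 * of_int \<lfloor>s / 4\<rfloor> in
     if r < 1 then (r, 0)
     else if r < 2 then (1, r - 1)
     else if r < 3 then (3 - r, 1)
     else (0, 4 - r))"

definition ctrl_path :: "real \<Rightarrow> real \<Rightarrow> real \<times> real" where
  "ctrl_path v t = bdry_point (v * t)"

definition omega :: "real \<Rightarrow> real \<Rightarrow> real \<Rightarrow> (real \<times> real) set" where
  "omega v a t = {z. \<bar>fst z - fst (ctrl_path v t)\<bar> < a \<and> \<bar>snd z - snd (ctrl_path v t)\<bar> < a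
                    \<and> 0 \<le> fst z \<and> fst z \<le> 1 \<and> 0 \<le> snd z \<and> snd z \<le> 1}"

definition tri :: "real \<Rightarrow> real" where
  "tri s = infdist s {2 * real_of_int k | k. True}"

definition ray :: "real \<Rightarrow> real \<Rightarrow> real \<Rightarrow> real \<Rightarrow> real \<Rightarrow> real \<times> real" where
  "ray x0 y0 t0 \<alpha> t = (tri (x0 + (t - t0) * cos \<alpha>), tri (y0 + (t - t0) * sin \<alpha>))"

definition tGCC :: "real \<Rightarrow> real \<Rightarrow> real \<Rightarrow> bool" where
  "tGCC v a T \<longleftrightarrow>
     (\<forall>x0 y0 t0 \<alpha>. 0 \<le> x0 \<and> x0 \<le> 1 \<and> 0 \<le> y0 \<and> y0 \<le> 1 \<and> -pi < \<alpha> \<and> \<alpha> \<le> pi \<longrightarrow>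
        (\<exists>t. 0 < t \<and> t < T \<and> ray x0 y0 t0 \<alpha> t \<in> omega v a t))"

text \<open>T_0(v,a): infimum of admissible T > 0, +infinity if none (Inf of empty ereal set).\<close>
definition T0 :: "real \<Rightarrow> real \<Rightarrow> ereal" where
  "T0 v a = Inf (ereal ` {T. 0 < T \<and> tGCC v a T})"

end

theory Submission
  imports Defs
begin

text \<open>
  Part 1. A ray crossing a wall of the square stays within distance \<open>a\<close> of it for time
  \<open>2a/n\<close>, where \<open>n\<close> is its normal speed, while it moves along the wall with speed at most
  \<open>\<tau>\<close>. Relative to the ray, the control square then advances along the boundary by
  \<open>(v - \<tau>) 2a/n\<close>; once this exceeds \<open>4 - 2a\<close> (one perimeter minus the width of the
  square) the two must meet, and choosing the wall well this holds for every direction as soon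
  as \<open>v > (2 - a)/a\<close>. For very large \<open>v\<close> the square catches a ray almost as soon as the ray
  comes within \<open>a\<close> of the boundary, which happens within time \<open>sqrt 2 (1 - 2a)\<close> (the
  diagonal of the central square \<open>[a, 1 - a]\<^sup>2\<close>); the diagonal ray through \<open>(a, a)\<close> shows that
  this time is needed.

  Part 2. If \<open>v = sqrt (p\<^sup>2 + q\<^sup>2) r\<close> with \<open>r\<close> rational, the ray leaving the centre in
  direction \<open>(p, q)\<close> and the control point are periodic in time with a common period, and
  they never coincide because \<open>sqrt 2\<close> is irrational. Their sup-distance is therefore bounded
  below by some \<open>a\<^sub>0 > 0\<close>, and for \<open>a < a\<^sub>0\<close> this ray is never observed.
\<close>

section \<open>The triangle wave\<close>

lemma tri_le_dist_even: "tri s \<le> \<bar>s - 2 * real_of_int k\<bar>"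
  unfolding tri_def by (rule infdist_le2[where a = "2 * real_of_int k"]) (auto simp: dist_real_def)

lemma tri_even_plus:
  assumes "\<bar>w\<bar> \<le> 1"
  shows "tri (2 * real_of_int k + w) = \<bar>w\<bar>"
proof (rule antisym)
  show "tri (2 * real_of_int k + w) \<le> \<bar>w\<bar>"
    using tri_le_dist_even[of "2 * real_of_int k + w" k] by simp
  have ne: "{2 * real_of_int m | m. True} \<noteq> {}" by auto
  have "\<bar>w\<bar> \<le> \<bar>2 * real_of_int k + w - 2 * real_of_int m\<bar>" for m
  proof (cases "k = m")
    case False
    then have "1 \<le> \<bar>real_of_int (k - m)\<bar>" by linarith
    then show ?thesis using assms by arith
  qed simp
  then show "\<bar>w\<bar> \<le> tri (2 * real_of_int k + w)"
    unfolding tri_def infdist_notempty[OF ne] by (intro cINF_greatest[OF ne]) (auto simp: dist_real_def)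
qed

lemma tri_abs: "\<bar>w\<bar> \<le> 1 \<Longrightarrow> tri w = \<bar>w\<bar>"
  using tri_even_plus[of w 0] by simp

lemma tri_cases:
  obtains k :: int where "\<bar>s - 2 * real_of_int k\<bar> \<le> 1" "tri s = \<bar>s - 2 * real_of_int k\<bar>"
proof
  define k where "k = \<lfloor>(s + 1) / 2\<rfloor>"
  have "real_of_int k \<le> (s + 1) / 2" "(s + 1) / 2 < real_of_int k + 1"
    unfolding k_def by linarith+
  then show "\<bar>s - 2 * real_of_int k\<bar> \<le> 1" by auto
  then show "tri s = \<bar>s - 2 * real_of_int k\<bar>"
    using tri_even_plus[of "s - 2 * real_of_int k" k] by simp
qed

lemma tri_nonneg: "0 \<le> tri s"
  unfolding tri_def by (rule infdist_nonneg)

lemma tri_le_1: "tri s \<le> 1"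
  by (rule tri_cases[of s]) auto

lemma tri_lipschitz: "\<bar>tri s - tri u\<bar> \<le> \<bar>s - u\<bar>"
  unfolding tri_def using infdist_triangle_abs[of s _ u] by (simp add: dist_real_def)

lemma continuous_on_tri [continuous_intros]:
  "continuous_on S f \<Longrightarrow> continuous_on S (\<lambda>t. tri (f t))"
  unfolding tri_def by (intro continuous_intros)

lemma tri_periodic: "tri (s + 2 * real_of_int k) = tri s"
proof (rule tri_cases[of s])
  fix m :: int
  assume m: "\<bar>s - 2 * real_of_int m\<bar> \<le> 1" "tri s = \<bar>s - 2 * real_of_int m\<bar>"
  have "s + 2 * real_of_int k = 2 * real_of_int (m + k) + (s - 2 * real_of_int m)" by simp
  then show ?thesis using tri_even_plus[OF m(1), of "m + k"] m(2) by presburger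
qed

lemma tri_between_Ints:
  assumes "real_of_int n \<le> u" "u \<le> real_of_int n + 1"
  shows "tri u = (if even n then u - real_of_int n else real_of_int n + 1 - u)"
proof (cases "even n")
  case True
  then obtain k where "n = 2 * k" by blast
  then have eq: "2 * real_of_int k + (u - real_of_int n) = u" by simp
  have "tri u = \<bar>u - real_of_int n\<bar>"
    using tri_even_plus[of "u - real_of_int n" k, unfolded eq] assms by simp
  then show ?thesis using True assms by simp
next
  case False
  then obtain k where "n = 2 * k + 1" by (rule oddE)
  then have eq: "2 * real_of_int (k + 1) + (u - real_of_int n - 1) = u" by simp
  have "tri u = \<bar>u - real_of_int n - 1\<bar>"
    using tri_even_plus[of "u - real_of_int n - 1" "k + 1", unfolded eq] assms by simp
  then show ?thesis using False assms by simp
qed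

lemma tri_of_int: "tri (real_of_int m) \<in> {0, 1}"
  using tri_between_Ints[of m "real_of_int m"] by simp

lemma Ints_if_tri_in_01:
  assumes "tri s \<in> {0, 1}"
  shows "s \<in> \<int>"
proof (rule tri_cases[of s])
  fix k :: int
  assume "tri s = \<bar>s - 2 * real_of_int k\<bar>"
  then have "s - 2 * real_of_int k \<in> {-1, 0, 1}"
    using assms by (cases "0 \<le> s - 2 * real_of_int k") auto
  then have "s \<in> {real_of_int (2 * k - 1), real_of_int (2 * k), real_of_int (2 * k + 1)}" by auto
  then show ?thesis by auto
qed

lemma tri_Rats:
  assumes "s \<in> \<rat>"
  shows "tri s \<in> \<rat>"
proof (rule tri_cases[of s])
  fix k :: int
  assume "tri s = \<bar>s - 2 * real_of_int k\<bar>"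
  moreover have "s - 2 * real_of_int k \<in> \<rat>" using assms by (intro Rats_diff Rats_mult) auto
  ultimately show ?thesis by (simp add: Rats_abs_iff)
qed

lemma tri_dist_eq_if_no_Ints_between:
  assumes "\<And>m::int. \<not> (min p q \<le> real_of_int m \<and> real_of_int m \<le> max p q)"
  shows "\<bar>tri q - tri p\<bar> = \<bar>q - p\<bar>"
proof -
  define n where "n = \<lfloor>min p q\<rfloor>"
  have n: "real_of_int n \<le> min p q" "min p q < real_of_int n + 1"
    unfolding n_def by linarith+
  have "\<not> (min p q \<le> real_of_int (n + 1) \<and> real_of_int (n + 1) \<le> max p q)"
    by (rule assms)
  then have "max p q < real_of_int n + 1"
    using n by linarith
  then have "real_of_int n \<le> p" "p \<le> real_of_int n + 1" "real_of_int n \<le> q" "q \<le> real_of_int n + 1"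
    using n by linarith+
  then show ?thesis
    using tri_between_Ints[of n p] tri_between_Ints[of n q] by (cases "even n") auto
qed

section \<open>The boundary path\<close>

lemma bdry_point_periodic: "bdry_point (s + 4 * real_of_int m) = bdry_point s"
proof -
  have "\<lfloor>(s + 4 * real_of_int m) / 4\<rfloor> = \<lfloor>s / 4\<rfloor> + m"
    by (metis add_divide_distrib floor_add_int nonzero_mult_div_cancel_left zero_neq_numeral)
  then show ?thesis unfolding bdry_point_def Let_def by simp
qed

lemma real_mod_4_cases:
  obtains r m where "0 \<le> r" "r < 4" "s = r + 4 * real_of_int m"
proof
  define m where "m = \<lfloor>s / 4\<rfloor>"
  show "0 \<le> s - 4 * real_of_int m" "s - 4 * real_of_int m < 4"
    unfolding m_def by linarith+
qed simp

lemma bdry_point_base: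
  assumes "0 \<le> r" "r < 4"
  shows "bdry_point r = (if r < 1 then (r, 0) else if r < 2 then (1, r - 1)
                         else if r < 3 then (3 - r, 1) else (0, 4 - r))"
proof -
  have "\<lfloor>r / 4\<rfloor> = 0" using assms by (simp add: floor_eq_iff)
  then show ?thesis unfolding bdry_point_def Let_def by simp
qed

text \<open>Each coordinate of the boundary path is a clipped triangle wave of period 4; this closed
  form gives continuity and the Lipschitz bound.\<close>

definition bdry_wave :: "real \<Rightarrow> real \<Rightarrow> real" where
  "bdry_wave c s = max 0 (min 1 (3/2 - 2 * tri ((s - c) / 2)))"

lemma bdry_point_eq_wave: "bdry_point s = (bdry_wave (3/2) s, bdry_wave (5/2) s)"
proof (rule real_mod_4_cases[of s])
  fix r m
  assume r: "0 \<le> r" "r < 4" "s = r + 4 * real_of_int m"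
  have tri_shift: "tri ((s - c) / 2) = \<bar>(r - c) / 2 - 2 * real_of_int j\<bar>"
    if "\<bar>(r - c) / 2 - 2 * real_of_int j\<bar> \<le> 1" for c j
  proof -
    have eq: "2 * real_of_int (m + j) + ((r - c) / 2 - 2 * real_of_int j) = (s - c) / 2"
      using r(3) by (simp add: field_simps)
    show ?thesis using tri_even_plus[OF that, of "m + j", unfolded eq] .
  qed
  have x: "tri ((s - 3/2) / 2) = (if r \<le> 7/2 then \<bar>r - 3/2\<bar> / 2 else (11/2 - r) / 2)"
    using tri_shift[of "3/2" 0] tri_shift[of "3/2" 1] r(1,2) by (auto simp: abs_if field_simps)
  have y: "tri ((s - 5/2) / 2) = (if 1/2 \<le> r then \<bar>r - 5/2\<bar> / 2 else (r + 3/2) / 2)"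
    using tri_shift[of "5/2" 0] tri_shift[of "5/2" "-1"] r(1,2) by (auto simp: abs_if field_simps)
  have "bdry_point s = bdry_point r" using r(3) bdry_point_periodic by simp
  then show ?thesis
    unfolding bdry_wave_def x y bdry_point_base[OF r(1,2)] using r(1,2)
    by (auto simp: abs_if max_def min_def field_simps)
qed

lemma bdry_wave_lipschitz: "\<bar>bdry_wave c s - bdry_wave c u\<bar> \<le> \<bar>s - u\<bar>"
proof -
  have "\<bar>tri ((s - c) / 2) - tri ((u - c) / 2)\<bar> \<le> \<bar>s - u\<bar> / 2"
    using tri_lipschitz[of "(s - c) / 2" "(u - c) / 2"] by (simp add: diff_divide_distrib[symmetric])
  then have "tri ((s - c) / 2) - tri ((u - c) / 2) \<le> \<bar>s - u\<bar> / 2 \<and>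
      - (tri ((s - c) / 2) - tri ((u - c) / 2)) \<le> \<bar>s - u\<bar> / 2"
    by (simp only: abs_le_iff)
  then show ?thesis
    unfolding bdry_wave_def by (auto simp: max_def min_def abs_le_iff)
qed

lemma continuous_on_bdry_wave [continuous_intros]:
  "continuous_on S f \<Longrightarrow> continuous_on S (\<lambda>t. bdry_wave c (f t))"
  unfolding bdry_wave_def by (intro continuous_intros) auto

lemma bdry_point_lipschitz:
  "\<bar>fst (bdry_point s) - fst (bdry_point u)\<bar> \<le> \<bar>s - u\<bar>"
  "\<bar>snd (bdry_point s) - snd (bdry_point u)\<bar> \<le> \<bar>s - u\<bar>"
  unfolding bdry_point_eq_wave by (simp_all add: bdry_wave_lipschitz)

lemma bdry_point_in_square: "fst (bdry_point s) \<in> {0..1}" "snd (bdry_point s) \<in> {0..1}"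
  unfolding bdry_point_eq_wave bdry_wave_def by auto

lemma bdry_point_on_boundary: "fst (bdry_point s) \<in> {0, 1} \<or> snd (bdry_point s) \<in> {0, 1}"
  by (rule real_mod_4_cases[of s]) (auto simp: bdry_point_periodic bdry_point_base)

lemma bdry_point_foot:
  assumes "0 \<le> x" "x \<le> 1"
  shows "bdry_point x = (x, 0)" "bdry_point (1 + x) = (1, x)" "bdry_point (3 - x) = (x, 1)"
    and "bdry_point (4 - x) = (0, x)"
proof -
  show "bdry_point x = (x, 0)" "bdry_point (1 + x) = (1, x)" "bdry_point (3 - x) = (x, 1)"
    using assms by (auto simp: bdry_point_base)
  show "bdry_point (4 - x) = (0, x)"
  proof (cases "x = 0")
    case True
    then show ?thesis using bdry_point_periodic[of 0 1] by (simp add: bdry_point_base)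
  qed (use assms in \<open>simp add: bdry_point_base\<close>)
qed

lemma Rats_if_bdry_point_Rats:
  assumes "fst (bdry_point s) \<in> \<rat>" "snd (bdry_point s) \<in> \<rat>"
  shows "s \<in> \<rat>"
proof (rule real_mod_4_cases[of s])
  fix r m
  assume r: "0 \<le> r" "r < 4" "s = r + 4 * real_of_int m"
  then have "bdry_point s = bdry_point r" using bdry_point_periodic by simp
  then have "r \<in> \<rat> \<or> r - 1 \<in> \<rat> \<or> 3 - r \<in> \<rat> \<or> 4 - r \<in> \<rat>"
    using assms bdry_point_base[OF r(1,2)] by (auto split: if_splits)
  then have "r \<in> \<rat>"
    by (metis Rats_diff_iff Rats_number_of Rats_1 add_diff_cancel diff_add_cancel)
  then show ?thesis using r(3) by (simp add: Rats_add Rats_mult)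
qed

section \<open>Catching a ray near a wall\<close>

definition linf_dist :: "real \<times> real \<Rightarrow> real \<times> real \<Rightarrow> real" where
  "linf_dist z w = max \<bar>fst z - fst w\<bar> \<bar>snd z - snd w\<bar>"

lemma linf_dist_bdry_bottom:
  assumes "0 \<le> x" "x \<le> 1" "0 \<le> y" "y < a" "\<bar>e\<bar> < a"
  shows "linf_dist (x, y) (bdry_point (x + e)) < a"
  using bdry_point_lipschitz[of "x + e" x] bdry_point_in_square[of "x + e"]
    bdry_point_foot(1)[OF assms(1,2)] assms
  by (auto simp: linf_dist_def)

lemma linf_dist_bdry_right:
  assumes "1 - a < x" "x \<le> 1" "0 \<le> y" "y \<le> 1" "\<bar>e\<bar> < a"
  shows "linf_dist (x, y) (bdry_point (1 + y + e)) < a"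
  using bdry_point_lipschitz[of "1 + y + e" "1 + y"] bdry_point_in_square[of "1 + y + e"]
    bdry_point_foot(2)[OF assms(3,4)] assms
  by (auto simp: linf_dist_def)

lemma linf_dist_bdry_top:
  assumes "0 \<le> x" "x \<le> 1" "1 - a < y" "y \<le> 1" "\<bar>e\<bar> < a"
  shows "linf_dist (x, y) (bdry_point (3 - x + e)) < a"
  using bdry_point_lipschitz[of "3 - x + e" "3 - x"] bdry_point_in_square[of "3 - x + e"]
    bdry_point_foot(3)[OF assms(1,2)] assms
  by (auto simp: linf_dist_def)

lemma linf_dist_bdry_left:
  assumes "0 \<le> x" "x < a" "0 \<le> y" "y \<le> 1" "\<bar>e\<bar> < a"
  shows "linf_dist (x, y) (bdry_point (4 - y + e)) < a"
  using bdry_point_lipschitz[of "4 - y + e" "4 - y"] bdry_point_in_square[of "4 - y + e"]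
    bdry_point_foot(4)[OF assms(3,4)] assms
  by (auto simp: linf_dist_def)

lemma exists_near_multiple_of_4:
  fixes g :: "real \<Rightarrow> real"
  assumes "0 < a" "a \<le> 2" "lo < hi" "continuous_on {lo..hi} g" "4 - 2 * a < g hi - g lo"
  shows "\<exists>t j. lo < t \<and> t < hi \<and> \<bar>g t - 4 * real_of_int j\<bar> < a"
proof -
  define m where "m = \<lfloor>(g lo - a) / 4\<rfloor>"
  define j where "j = m + 1"
  have "real_of_int m \<le> (g lo - a) / 4" "(g lo - a) / 4 < real_of_int m + 1"
    unfolding m_def by linarith+
  moreover have "real_of_int j = real_of_int m + 1" unfolding j_def by simp
  ultimately have j: "g lo < 4 * real_of_int j + a" "4 * real_of_int j - a < g hi"
    using assms(5) by argo+
  have "\<exists>c. g lo < c \<and> c < g hi \<and> \<bar>c - 4 * real_of_int j\<bar> < a"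
    using j assms(1,2,5)
    by (intro exI[of _ "(max (g lo) (4 * real_of_int j - a) + min (g hi) (4 * real_of_int j + a)) / 2"])
      (auto simp: max_def min_def abs_if field_simps)
  then obtain c where c: "g lo < c" "c < g hi" "\<bar>c - 4 * real_of_int j\<bar> < a" by blast
  obtain t where "lo \<le> t" "t \<le> hi" "g t = c"
    using IVT'[of g lo c hi] c assms(3,4) by auto
  moreover from this c have "t \<noteq> lo" "t \<noteq> hi" by auto
  ultimately show ?thesis using c(3) by (intro exI[of _ t] exI[of _ j]) auto
qed

text \<open>\<open>\<sigma> t\<close> is the arclength position on the boundary path of the point of a side closest to
  \<open>z t\<close>; the control square covers \<open>z t\<close> as soon as \<open>v t - \<sigma> t\<close> is within \<open>a\<close> of \<open>4\<int>\<close>.\<close>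

lemma caught_along_foot:
  fixes \<sigma> :: "real \<Rightarrow> real" and z :: "real \<Rightarrow> real \<times> real"
  assumes "0 < a" "a \<le> 2" "lo < hi" "continuous_on {lo..hi} \<sigma>"
    and "4 - 2 * a < v * (hi - lo) - (\<sigma> hi - \<sigma> lo)"
    and near: "\<And>t e. lo < t \<Longrightarrow> t < hi \<Longrightarrow> \<bar>e\<bar> < a \<Longrightarrow> linf_dist (z t) (bdry_point (\<sigma> t + e)) < a"
  shows "\<exists>t. lo < t \<and> t < hi \<and> linf_dist (z t) (bdry_point (v * t)) < a"
proof -
  have "continuous_on {lo..hi} (\<lambda>t. v * t - \<sigma> t)"
    using assms(4) by (intro continuous_intros)
  then obtain t j where t: "lo < t" "t < hi" "\<bar>v * t - \<sigma> t - 4 * real_of_int j\<bar> < a"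
    using exists_near_multiple_of_4[of a lo hi "\<lambda>t. v * t - \<sigma> t"] assms(1-3,5)
    by (auto simp: algebra_simps)
  have "bdry_point (v * t) = bdry_point (\<sigma> t + (v * t - \<sigma> t - 4 * real_of_int j) + 4 * real_of_int j)"
    by simp
  then have "bdry_point (v * t) = bdry_point (\<sigma> t + (v * t - \<sigma> t - 4 * real_of_int j))"
    by (simp only: bdry_point_periodic)
  then show ?thesis using near[OF t] t by auto
qed

lemma caught_near_horizontal_wall:
  fixes X Y :: "real \<Rightarrow> real"
  assumes "0 < a" "a \<le> 2" "lo < hi" "continuous_on {lo..hi} X"
    and "\<And>t. X t \<in> {0..1}" "\<And>t. Y t \<in> {0..1}"
    and wall: "(\<forall>t. lo < t \<and> t < hi \<longrightarrow> Y t < a) \<or> (\<forall>t. lo < t \<and> t < hi \<longrightarrow> 1 - a < Y t)"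
    and "4 - 2 * a < v * (hi - lo) - \<bar>X hi - X lo\<bar>"
  shows "\<exists>t. lo < t \<and> t < hi \<and> linf_dist (X t, Y t) (bdry_point (v * t)) < a"
  using wall
proof
  assume "\<forall>t. lo < t \<and> t < hi \<longrightarrow> Y t < a"
  then show ?thesis
    using assms by (intro caught_along_foot[where \<sigma> = X]) (auto intro!: linf_dist_bdry_bottom)
next
  assume "\<forall>t. lo < t \<and> t < hi \<longrightarrow> 1 - a < Y t"
  then show ?thesis
    using assms by (intro caught_along_foot[where \<sigma> = "\<lambda>t. 3 - X t"])
      (auto intro!: linf_dist_bdry_top continuous_intros)
qed

lemma caught_near_vertical_wall:
  fixes X Y :: "real \<Rightarrow> real"
  assumes "0 < a" "a \<le> 2" "lo < hi" "continuous_on {lo..hi} Y"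
    and "\<And>t. X t \<in> {0..1}" "\<And>t. Y t \<in> {0..1}"
    and wall: "(\<forall>t. lo < t \<and> t < hi \<longrightarrow> X t < a) \<or> (\<forall>t. lo < t \<and> t < hi \<longrightarrow> 1 - a < X t)"
    and "4 - 2 * a < v * (hi - lo) - \<bar>Y hi - Y lo\<bar>"
  shows "\<exists>t. lo < t \<and> t < hi \<and> linf_dist (X t, Y t) (bdry_point (v * t)) < a"
  using wall
proof
  assume "\<forall>t. lo < t \<and> t < hi \<longrightarrow> X t < a"
  then show ?thesis
    using assms by (intro caught_along_foot[where \<sigma> = "\<lambda>t. 4 - Y t"])
      (auto intro!: linf_dist_bdry_left continuous_intros)
next
  assume "\<forall>t. lo < t \<and> t < hi \<longrightarrow> 1 - a < X t"
  then show ?thesis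
    using assms by (intro caught_along_foot[where \<sigma> = "\<lambda>t. 1 + Y t"])
      (auto intro!: linf_dist_bdry_right continuous_intros)
qed

lemma ray_in_square: "fst (ray x0 y0 t0 \<alpha> t) \<in> {0..1}" "snd (ray x0 y0 t0 \<alpha> t) \<in> {0..1}"
  unfolding ray_def using tri_nonneg tri_le_1 by auto

lemma ray_in_omega_iff:
  "ray x0 y0 t0 \<alpha> t \<in> omega v a t \<longleftrightarrow> linf_dist (ray x0 y0 t0 \<alpha> t) (bdry_point (v * t)) < a"
  using ray_in_square[of x0 y0 t0 \<alpha> t] unfolding omega_def ctrl_path_def linf_dist_def by auto

lemma continuous_on_ray [continuous_intros]: "continuous_on S (ray x0 y0 t0 \<alpha>)"
  unfolding ray_def by (intro continuous_intros)

lemma tri_affine_lipschitz: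
  "\<bar>tri (u + (t - t0) * c) - tri (u + (t' - t0) * c)\<bar> \<le> \<bar>c\<bar> * \<bar>t - t'\<bar>"
proof -
  have "(u + (t - t0) * c) - (u + (t' - t0) * c) = c * (t - t')" by (simp add: algebra_simps)
  then show ?thesis using tri_lipschitz[of "u + (t - t0) * c" "u + (t' - t0) * c"] by (simp add: abs_mult)
qed

lemma ray_lipschitz:
  "\<bar>fst (ray x0 y0 t0 \<alpha> t) - fst (ray x0 y0 t0 \<alpha> t')\<bar> \<le> \<bar>cos \<alpha>\<bar> * \<bar>t - t'\<bar>"
  "\<bar>snd (ray x0 y0 t0 \<alpha> t) - snd (ray x0 y0 t0 \<alpha> t')\<bar> \<le> \<bar>sin \<alpha>\<bar> * \<bar>t - t'\<bar>"
  unfolding ray_def by (simp_all add: tri_affine_lipschitz)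

lemma ray_coordinates:
  fixes X Y :: "real \<Rightarrow> real"
  assumes XY: "\<And>t. ray x0 y0 t0 \<alpha> t = (X t, Y t)"
  shows "X t \<in> {0..1}" "Y t \<in> {0..1}" "continuous_on S X" "continuous_on S Y"
    and "\<bar>X t - X t'\<bar> \<le> \<bar>cos \<alpha>\<bar> * \<bar>t - t'\<bar>" "\<bar>Y t - Y t'\<bar> \<le> \<bar>sin \<alpha>\<bar> * \<bar>t - t'\<bar>"
proof -
  have X: "X = (\<lambda>t. fst (ray x0 y0 t0 \<alpha> t))" and Y: "Y = (\<lambda>t. snd (ray x0 y0 t0 \<alpha> t))"
    by (simp_all add: XY)
  show "X t \<in> {0..1}" "Y t \<in> {0..1}"
    unfolding X Y by (rule ray_in_square)+
  show "continuous_on S X" "continuous_on S Y"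
    unfolding X Y by (intro continuous_intros)+
  show "\<bar>X t - X t'\<bar> \<le> \<bar>cos \<alpha>\<bar> * \<bar>t - t'\<bar>" "\<bar>Y t - Y t'\<bar> \<le> \<bar>sin \<alpha>\<bar> * \<bar>t - t'\<bar>"
    unfolding X Y by (rule ray_lipschitz)+
qed

lemma ray_caught_near_horizontal_wall:
  fixes X Y :: "real \<Rightarrow> real"
  assumes XY: "\<And>t. ray x0 y0 t0 \<alpha> t = (X t, Y t)"
    and "0 < a" "a \<le> 2" "0 \<le> lo" "lo < hi" "hi \<le> T"
    and "(\<forall>t. lo < t \<and> t < hi \<longrightarrow> Y t < a) \<or> (\<forall>t. lo < t \<and> t < hi \<longrightarrow> 1 - a < Y t)"
    and "4 - 2 * a < v * (hi - lo) - \<bar>X hi - X lo\<bar>"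
  shows "\<exists>t. 0 < t \<and> t < T \<and> ray x0 y0 t0 \<alpha> t \<in> omega v a t"
proof -
  obtain t where "lo < t" "t < hi" "linf_dist (X t, Y t) (bdry_point (v * t)) < a"
    using caught_near_horizontal_wall[OF assms(2,3,5) ray_coordinates(3,1,2)[OF XY] assms(7,8)] by blast
  then show ?thesis
    using assms(4,6) by (intro exI[of _ t]) (simp add: XY ray_in_omega_iff[of x0 y0 t0 \<alpha> t, unfolded XY])
qed

lemma ray_caught_near_vertical_wall:
  fixes X Y :: "real \<Rightarrow> real"
  assumes XY: "\<And>t. ray x0 y0 t0 \<alpha> t = (X t, Y t)"
    and "0 < a" "a \<le> 2" "0 \<le> lo" "lo < hi" "hi \<le> T"
    and "(\<forall>t. lo < t \<and> t < hi \<longrightarrow> X t < a) \<or> (\<forall>t. lo < t \<and> t < hi \<longrightarrow> 1 - a < X t)"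
    and "4 - 2 * a < v * (hi - lo) - \<bar>Y hi - Y lo\<bar>"
  shows "\<exists>t. 0 < t \<and> t < T \<and> ray x0 y0 t0 \<alpha> t \<in> omega v a t"
proof -
  obtain t where "lo < t" "t < hi" "linf_dist (X t, Y t) (bdry_point (v * t)) < a"
    using caught_near_vertical_wall[OF assms(2,3,5) ray_coordinates(4,1,2)[OF XY] assms(7,8)] by blast
  then show ?thesis
    using assms(4,6) by (intro exI[of _ t]) (simp add: XY ray_in_omega_iff[of x0 y0 t0 \<alpha> t, unfolded XY])
qed

section \<open>Finite control time above the critical speed\<close>

lemma exists_even_crossing:
  assumes "s \<noteq> 0"
  shows "\<exists>ts k. B \<le> ts \<and> ts \<le> B + 2 / \<bar>s\<bar> \<and> w + (ts - \<theta>) * s = 2 * real_of_int k"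
proof -
  define x where "x = w + (B - \<theta>) * s"
  define k where "k = (if 0 < s then \<lceil>x / 2\<rceil> else \<lfloor>x / 2\<rfloor>)"
  define ts where "ts = B + (2 * real_of_int k - x) / s"
  have "\<exists>d. (2 * real_of_int k - x) / s = d / \<bar>s\<bar> \<and> 0 \<le> d \<and> d \<le> 2"
  proof (cases "0 < s")
    case True
    then have "k = \<lceil>x / 2\<rceil>" by (simp add: k_def)
    then have "x / 2 \<le> real_of_int k" "real_of_int k < x / 2 + 1" by linarith+
    then show ?thesis using True by (intro exI[of _ "2 * real_of_int k - x"]) auto
  next
    case False
    then have "k = \<lfloor>x / 2\<rfloor>" by (simp add: k_def)
    then have "real_of_int k \<le> x / 2" "x / 2 < real_of_int k + 1" by linarith+
    then show ?thesis using False assms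
      by (intro exI[of _ "x - 2 * real_of_int k"]) (auto simp: field_simps)
  qed
  then have "0 \<le> (2 * real_of_int k - x) / s \<and> (2 * real_of_int k - x) / s \<le> 2 / \<bar>s\<bar>"
    by (auto intro!: divide_right_mono)
  moreover have "w + (ts - \<theta>) * s = 2 * real_of_int k"
    unfolding ts_def x_def using assms by (simp add: field_simps)
  ultimately show ?thesis by (intro exI[of _ ts] exI[of _ k]) (simp add: ts_def)
qed

lemma tri_small_while_crossing:
  assumes "0 < \<delta>" "\<delta> \<le> \<bar>s\<bar>" "0 < a" "a \<le> 1"
  shows "\<exists>lo. 0 \<le> lo \<and> lo + 2 * a / \<bar>s\<bar> \<le> (2 * a + 2) / \<delta> \<and>
    (\<forall>t. lo < t \<and> t < lo + 2 * a / \<bar>s\<bar> \<longrightarrow> tri (w + (t - \<theta>) * s) < a)"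
proof -
  have s: "0 < \<bar>s\<bar>" using assms by linarith
  obtain ts k where ts: "a / \<bar>s\<bar> \<le> ts" "ts \<le> a / \<bar>s\<bar> + 2 / \<bar>s\<bar>"
    "w + (ts - \<theta>) * s = 2 * real_of_int k"
    using exists_even_crossing[of s "a / \<bar>s\<bar>" w \<theta>] s by auto
  have "tri (w + (t - \<theta>) * s) < a" if "\<bar>t - ts\<bar> < a / \<bar>s\<bar>" for t
  proof -
    have "\<bar>(t - ts) * s\<bar> < a" using that s by (simp add: abs_mult pos_less_divide_eq)
    moreover have "w + (t - \<theta>) * s - 2 * real_of_int k = (t - ts) * s"
      using ts(3) by (simp add: algebra_simps)
    ultimately show ?thesis using tri_le_dist_even[of "w + (t - \<theta>) * s" k] by simp
  qed
  moreover have "(2 * a + 2) / \<bar>s\<bar> \<le> (2 * a + 2) / \<delta>"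
    using assms by (intro divide_left_mono) auto
  ultimately show ?thesis using ts s
    by (intro exI[of _ "ts - a / \<bar>s\<bar>"]) (auto simp: add_divide_distrib)
qed

lemma unit_circle_speed_bound:
  fixes n \<tau> v :: real
  assumes "0 \<le> n" "n \<le> \<tau>" "n\<^sup>2 + \<tau>\<^sup>2 = 1" "3 \<le> v"
  shows "v * n \<le> v - \<tau>"
proof -
  \<comment> \<open>\<open>n \<le> 4/5\<close> and \<open>\<tau> \<le> 3 - 3 n\<close>, so \<open>v - \<tau> \<ge> v n + (v - 3) (1 - n) \<ge> v n\<close>\<close>
  have "n\<^sup>2 \<le> \<tau>\<^sup>2" using assms(1,2) by (intro power_mono) auto
  moreover have "(4/5 :: real)\<^sup>2 = 16/25" by (simp add: power2_eq_square)
  ultimately have "n\<^sup>2 \<le> (4/5)\<^sup>2" using assms(3) by linarith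
  then have n45: "n \<le> 4/5" by (rule power2_le_imp_le) simp
  have "\<tau>\<^sup>2 = 1 - n\<^sup>2" using assms(3) by simp
  then have "(3 - 3 * n)\<^sup>2 - \<tau>\<^sup>2 = 2 * ((4 - 5 * n) * (1 - n))"
    by (simp add: power2_eq_square algebra_simps)
  moreover have "0 \<le> (4 - 5 * n) * (1 - n)" using n45 by (intro mult_nonneg_nonneg) auto
  ultimately have "\<tau>\<^sup>2 \<le> (3 - 3 * n)\<^sup>2" by linarith
  then have \<tau>: "\<tau> \<le> 3 - 3 * n" by (rule power2_le_imp_le) (use n45 in simp)
  have "0 \<le> (v - 3) * (1 - n)" using assms(4) n45 by (intro mult_nonneg_nonneg) auto
  moreover have "(v - 3) * (1 - n) = v - 3 - v * n + 3 * n" by (simp add: algebra_simps)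
  ultimately show ?thesis using \<tau> by linarith
qed

lemma crossing_fast_enough:
  fixes n \<tau> a v :: real
  assumes "0 < n" "0 \<le> \<tau>" "n\<^sup>2 + \<tau>\<^sup>2 = 1" "0 < a" "a < 1/2" "(2 - a) / a < v"
    and "\<tau> < v - (2 - a) / a \<or> n \<le> \<tau>"
  shows "4 - 2 * a < (v - \<tau>) * (2 * a / n)"
proof -
  have av: "2 - a < a * v" using assms(4,6) by (simp add: pos_divide_less_eq mult.commute)
  have "n\<^sup>2 \<le> 1" using assms(3) zero_le_power2[of \<tau>] by linarith
  then have "n \<le> 1" using power2_le_imp_le[of n 1] by simp
  then have l: "2 * a \<le> 2 * a / n" using assms(1,4) by (simp add: le_divide_eq)
  from assms(7) show ?thesis
  proof
    assume "\<tau> < v - (2 - a) / a"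
    then have v0: "(2 - a) / a < v - \<tau>" by linarith
    moreover have "0 < (2 - a) / a" using assms(4,5) by simp
    ultimately have "0 \<le> v - \<tau>" by linarith
    have "2 - a < a * (v - \<tau>)" using v0 assms(4) by (simp add: pos_divide_less_eq mult.commute)
    moreover have "(v - \<tau>) * (2 * a) \<le> (v - \<tau>) * (2 * a / n)"
      using l \<open>0 \<le> v - \<tau>\<close> by (rule mult_left_mono)
    moreover have "(v - \<tau>) * (2 * a) = 2 * (a * (v - \<tau>))" by simp
    ultimately show ?thesis by linarith
  next
    assume "n \<le> \<tau>"
    moreover have "3 \<le> (2 - a) / a" using assms(4,5) by (simp add: le_divide_eq)
    ultimately have "v * n \<le> v - \<tau>"
      using assms(1,3,6) by (intro unit_circle_speed_bound) auto
    then have "v * n * (2 * a / n) \<le> (v - \<tau>) * (2 * a / n)"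
      using assms(1,4) by (intro mult_right_mono) auto
    moreover have "v * n * (2 * a / n) = 2 * (a * v)" using assms(1) by simp
    ultimately show ?thesis using av by linarith
  qed
qed

lemma caught_while_crossing:
  fixes X :: "real \<Rightarrow> real"
  assumes a: "0 < a" "a < 1/2" "(2 - a) / a < v" and \<delta>: "0 < \<delta>" "\<delta> \<le> \<bar>s\<bar>"
    and cs: "c\<^sup>2 + s\<^sup>2 = 1" "\<delta> \<le> v - (2 - a) / a" "\<bar>c\<bar> < \<delta> \<or> \<bar>s\<bar> \<le> \<bar>c\<bar>"
    and lip: "\<And>t t'. \<bar>X t - X t'\<bar> \<le> \<bar>c\<bar> * \<bar>t - t'\<bar>"
  shows "\<exists>lo hi. 0 \<le> lo \<and> lo < hi \<and> hi \<le> (2 * a + 2) / \<delta> \<and>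
    (\<forall>t. lo < t \<and> t < hi \<longrightarrow> tri (w + (t - \<theta>) * s) < a) \<and>
    4 - 2 * a < v * (hi - lo) - \<bar>X hi - X lo\<bar>"
proof -
  obtain lo where lo: "0 \<le> lo" "lo + 2 * a / \<bar>s\<bar> \<le> (2 * a + 2) / \<delta>"
    "\<forall>t. lo < t \<and> t < lo + 2 * a / \<bar>s\<bar> \<longrightarrow> tri (w + (t - \<theta>) * s) < a"
    using tri_small_while_crossing[OF \<delta>, of a w \<theta>] a by auto
  have s: "0 < \<bar>s\<bar>" using \<delta> by linarith
  define hi where "hi = lo + 2 * a / \<bar>s\<bar>"
  have "\<bar>c\<bar> < v - (2 - a) / a \<or> \<bar>s\<bar> \<le> \<bar>c\<bar>" using cs(2,3) by auto
  then have "4 - 2 * a < (v - \<bar>c\<bar>) * (2 * a / \<bar>s\<bar>)"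
    by (intro crossing_fast_enough) (use a s cs(1) in auto)
  also have "\<dots> \<le> v * (hi - lo) - \<bar>X hi - X lo\<bar>"
    using lip[of hi lo] a s unfolding hi_def by (simp add: left_diff_distrib diff_divide_distrib)
  finally show ?thesis using lo a s unfolding hi_def[symmetric]
    by (intro exI[of _ lo] exI[of _ hi]) (auto simp: hi_def)
qed

lemma unit_circle_wall_choice:
  fixes c s \<delta> :: real
  assumes "c\<^sup>2 + s\<^sup>2 = 1" "\<delta> \<le> 1/2"
  shows "\<delta> \<le> \<bar>s\<bar> \<and> (\<bar>c\<bar> < \<delta> \<or> \<bar>s\<bar> \<le> \<bar>c\<bar>) \<or> \<delta> \<le> \<bar>c\<bar> \<and> (\<bar>s\<bar> < \<delta> \<or> \<bar>c\<bar> \<le> \<bar>s\<bar>)"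
proof (cases "\<bar>s\<bar> < \<delta>")
  case True
  then have "\<bar>s\<bar>\<^sup>2 < (1/2)\<^sup>2" using assms(2) by (intro power_strict_mono) auto
  then have "(1/2)\<^sup>2 < \<bar>c\<bar>\<^sup>2" using assms(1) by (simp add: power2_eq_square)
  then have "1/2 < \<bar>c\<bar>" by (rule power_less_imp_less_base) simp
  then show ?thesis using True assms(2) by simp
qed auto

lemma tGCC_above_critical_speed:
  assumes a: "0 < a" "a < 1/2" and v: "(2 - a) / a < v"
  shows "\<exists>T>0. tGCC v a T"
proof -
  define \<delta> where "\<delta> = min (v - (2 - a) / a) (1/2)"
  have "0 < \<delta>" using v by (simp add: \<delta>_def)
  moreover have "\<delta> \<le> v - (2 - a) / a" unfolding \<delta>_def by (rule min.cobounded1)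
  moreover have "\<delta> \<le> 1/2" unfolding \<delta>_def by (rule min.cobounded2)
  ultimately have \<delta>: "0 < \<delta>" "\<delta> \<le> v - (2 - a) / a" "\<delta> \<le> 1/2" by blast+
  define T where "T = (2 * a + 2) / \<delta>"
  have "tGCC v a T"
    unfolding tGCC_def
  proof (intro allI impI)
    fix x0 y0 t0 \<alpha> :: real
    define X where "X t = tri (x0 + (t - t0) * cos \<alpha>)" for t
    define Y where "Y t = tri (y0 + (t - t0) * sin \<alpha>)" for t
    have XY: "ray x0 y0 t0 \<alpha> t = (X t, Y t)" for t by (simp add: X_def Y_def ray_def)
    note lip = ray_coordinates(5,6)[OF XY]
    have a2: "a \<le> 2" using a by simp
    from unit_circle_wall_choice[OF sin_cos_squared_add2[of \<alpha>] \<delta>(3)]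
    show "\<exists>t. 0 < t \<and> t < T \<and> ray x0 y0 t0 \<alpha> t \<in> omega v a t"
    proof
      assume h: "\<delta> \<le> \<bar>sin \<alpha>\<bar> \<and> (\<bar>cos \<alpha>\<bar> < \<delta> \<or> \<bar>sin \<alpha>\<bar> \<le> \<bar>cos \<alpha>\<bar>)"
      from caught_while_crossing[OF a v \<delta>(1) conjunct1[OF h] sin_cos_squared_add2 \<delta>(2) conjunct2[OF h] lip(1),
          where w = y0 and \<theta> = t0]
      obtain lo hi where "0 \<le> lo" "lo < hi" "hi \<le> T"
        "\<forall>t. lo < t \<and> t < hi \<longrightarrow> Y t < a" "4 - 2 * a < v * (hi - lo) - \<bar>X hi - X lo\<bar>"
        unfolding Y_def[symmetric] T_def by blast
      then show ?thesis by (intro ray_caught_near_horizontal_wall[OF XY a(1) a2]) auto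
    next
      assume h: "\<delta> \<le> \<bar>cos \<alpha>\<bar> \<and> (\<bar>sin \<alpha>\<bar> < \<delta> \<or> \<bar>cos \<alpha>\<bar> \<le> \<bar>sin \<alpha>\<bar>)"
      from caught_while_crossing[OF a v \<delta>(1) conjunct1[OF h] sin_cos_squared_add \<delta>(2) conjunct2[OF h] lip(2),
          where w = x0 and \<theta> = t0]
      obtain lo hi where "0 \<le> lo" "lo < hi" "hi \<le> T"
        "\<forall>t. lo < t \<and> t < hi \<longrightarrow> X t < a" "4 - 2 * a < v * (hi - lo) - \<bar>Y hi - Y lo\<bar>"
        unfolding X_def[symmetric] T_def by blast
      then show ?thesis by (intro ray_caught_near_vertical_wall[OF XY a(1) a2]) auto
    qed
  qed
  moreover have "0 < T" using a \<delta> unfolding T_def by simp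
  ultimately show ?thesis by blast
qed

section \<open>Fast control sets\<close>

lemma tGCC_time_gt_diagonal:
  assumes a: "0 < a" "a < 1/2" and T: "tGCC v a T"
  shows "sqrt 2 * (1 - 2 * a) < T"
proof (rule ccontr)
  assume "\<not> ?thesis"
  then have TL: "T \<le> sqrt 2 * (1 - 2 * a)" by simp
  have pi4: "-pi < pi / 4" "pi / 4 \<le> pi" using pi_gt_zero by linarith+
  have H: "\<And>x0 y0 t0 \<alpha>. 0 \<le> x0 \<and> x0 \<le> 1 \<and> 0 \<le> y0 \<and> y0 \<le> 1 \<and> -pi < \<alpha> \<and> \<alpha> \<le> pi \<Longrightarrow>
      \<exists>t. 0 < t \<and> t < T \<and> ray x0 y0 t0 \<alpha> t \<in> omega v a t"
    using T unfolding tGCC_def by blast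
  obtain t where t: "0 < t" "t < T" "ray a a 0 (pi / 4) t \<in> omega v a t"
    using H[of a a "pi / 4" 0] a pi4 by auto
  define u where "u = a + t * (sqrt 2 / 2)"
  \<comment> \<open>along the diagonal ray the point \<open>(u, u)\<close> stays at sup-distance more than \<open>a\<close> from the boundary\<close>
  have "t * (sqrt 2 / 2) < sqrt 2 * (1 - 2 * a) * (sqrt 2 / 2)"
    using t TL by (intro mult_strict_right_mono) auto
  then have u: "a < u" "u < 1 - a" unfolding u_def using t by (auto simp: algebra_simps)
  then have "ray a a 0 (pi / 4) t = (u, u)"
    unfolding ray_def u_def using tri_abs[of u] a by (simp add: cos_45 sin_45 u_def)
  then have "linf_dist (u, u) (bdry_point (v * t)) < a"
    using t(3)[unfolded ray_in_omega_iff] by simp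
  then show False
    using bdry_point_on_boundary[of "v * t"] u by (auto simp: linf_dist_def)
qed

lemma tri_affine_width_le:
  assumes "0 < b" "ta \<le> tb"
    and strip: "\<And>t. ta \<le> t \<Longrightarrow> t \<le> tb \<Longrightarrow> tri (w + (t - \<theta>) * c) \<in> {b..1 - b}"
  shows "\<bar>c\<bar> * (tb - ta) \<le> 1 - 2 * b"
proof -
  define u where "u t = w + (t - \<theta>) * c" for t
  have "\<not> (min (u ta) (u tb) \<le> real_of_int m \<and> real_of_int m \<le> max (u ta) (u tb))" for m
  proof
    assume m: "min (u ta) (u tb) \<le> real_of_int m \<and> real_of_int m \<le> max (u ta) (u tb)"
    have cont: "continuous_on {ta..tb} u" unfolding u_def by (intro continuous_intros)
    obtain t where "ta \<le> t" "t \<le> tb" "u t = real_of_int m"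
    proof (cases "u ta \<le> u tb")
      case True
      then show thesis using IVT'[of u ta "real_of_int m" tb, OF _ _ assms(2) cont] m that by auto
    next
      case False
      then show thesis using IVT2'[of u tb "real_of_int m" ta, OF _ _ assms(2) cont] m that by auto
    qed
    then show False
      using strip[of t] tri_of_int[of m] assms(1) unfolding u_def by auto
  qed
  then have "\<bar>tri (u tb) - tri (u ta)\<bar> = \<bar>u tb - u ta\<bar>"
    by (rule tri_dist_eq_if_no_Ints_between)
  also have "u tb - u ta = (tb - ta) * c" unfolding u_def by (simp add: algebra_simps)
  also have "\<bar>(tb - ta) * c\<bar> = \<bar>c\<bar> * (tb - ta)" using assms(2) by (simp add: abs_mult)
  finally show ?thesis
    using strip[of ta] strip[of tb] assms(2) unfolding u_def by (auto simp: abs_le_iff)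
qed

lemma ray_leaves_central_square:
  assumes "0 < b" "ta \<le> tb" "sqrt 2 * (1 - 2 * b) < tb - ta"
  shows "\<exists>t. ta \<le> t \<and> t \<le> tb \<and>
    (fst (ray x0 y0 t0 \<alpha> t) \<notin> {b..1 - b} \<or> snd (ray x0 y0 t0 \<alpha> t) \<notin> {b..1 - b})"
proof (rule ccontr)
  assume "\<not> ?thesis"
  then have width: "\<bar>cos \<alpha>\<bar> * (tb - ta) \<le> 1 - 2 * b" "\<bar>sin \<alpha>\<bar> * (tb - ta) \<le> 1 - 2 * b"
    using tri_affine_width_le[OF assms(1,2), of x0 t0 "cos \<alpha>"]
      tri_affine_width_le[OF assms(1,2), of y0 t0 "sin \<alpha>"]
    unfolding ray_def by auto
  then have "(\<bar>cos \<alpha>\<bar> * (tb - ta))\<^sup>2 \<le> (1 - 2 * b)\<^sup>2" "(\<bar>sin \<alpha>\<bar> * (tb - ta))\<^sup>2 \<le> (1 - 2 * b)\<^sup>2"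
    using assms(2) by (auto intro!: power_mono)
  moreover have "(\<bar>cos \<alpha>\<bar> * (tb - ta))\<^sup>2 + (\<bar>sin \<alpha>\<bar> * (tb - ta))\<^sup>2 = (tb - ta)\<^sup>2"
    by (simp add: power_mult_distrib distrib_right[symmetric])
  ultimately have "(tb - ta)\<^sup>2 \<le> (sqrt 2 * (1 - 2 * b))\<^sup>2"
    by (simp add: power_mult_distrib)
  then have "tb - ta \<le> sqrt 2 * (1 - 2 * b)"
  proof (rule power2_le_imp_le)
    have "0 \<le> \<bar>cos \<alpha>\<bar> * (tb - ta)" using assms(2) by simp
    then show "0 \<le> sqrt 2 * (1 - 2 * b)" using width(1) by simp
  qed
  then show False using assms(3) by simp
qed

lemma near_wall_after_exit:
  fixes Z :: "real \<Rightarrow> real"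
  assumes "Z t1 \<notin> {a - d..1 - (a - d)}" "\<And>t. t1 < t \<Longrightarrow> t < t1 + d \<Longrightarrow> \<bar>Z t - Z t1\<bar> < d"
  shows "(\<forall>t. t1 < t \<and> t < t1 + d \<longrightarrow> Z t < a) \<or> (\<forall>t. t1 < t \<and> t < t1 + d \<longrightarrow> 1 - a < Z t)"
proof -
  have "Z t1 < a - d \<or> 1 - (a - d) < Z t1" using assms(1) by auto
  moreover have "Z t < Z t1 + d" "Z t1 - d < Z t" if "t1 < t" "t < t1 + d" for t
    using assms(2)[OF that, unfolded abs_less_iff] by linarith+
  ultimately show ?thesis by force
qed

lemma ray_caught_soon_after_leaving:
  assumes a: "0 < a" "a < 1/2" and d: "0 < d" "4 + d \<le> v * d" and t1: "0 \<le> t1" "t1 + d \<le> T"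
    and "fst (ray x0 y0 t0 \<alpha> t1) \<notin> {a - d..1 - (a - d)} \<or> snd (ray x0 y0 t0 \<alpha> t1) \<notin> {a - d..1 - (a - d)}"
  shows "\<exists>t. 0 < t \<and> t < T \<and> ray x0 y0 t0 \<alpha> t \<in> omega v a t"
proof -
  define X where "X t = fst (ray x0 y0 t0 \<alpha> t)" for t
  define Y where "Y t = snd (ray x0 y0 t0 \<alpha> t)" for t
  have XY: "ray x0 y0 t0 \<alpha> t = (X t, Y t)" for t by (simp add: X_def Y_def)
  have lip: "\<bar>X t - X t'\<bar> \<le> \<bar>t - t'\<bar>" "\<bar>Y t - Y t'\<bar> \<le> \<bar>t - t'\<bar>" for t t'
  proof -
    have "\<bar>cos \<alpha>\<bar> * \<bar>t - t'\<bar> \<le> \<bar>t - t'\<bar>" "\<bar>sin \<alpha>\<bar> * \<bar>t - t'\<bar> \<le> \<bar>t - t'\<bar>"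
      by (simp_all add: mult_left_le_one_le)
    then show "\<bar>X t - X t'\<bar> \<le> \<bar>t - t'\<bar>" "\<bar>Y t - Y t'\<bar> \<le> \<bar>t - t'\<bar>"
      using ray_coordinates(5,6)[OF XY, of t t'] by linarith+
  qed
  have close: "\<bar>X t - X t1\<bar> < d" "\<bar>Y t - Y t1\<bar> < d" if "t1 < t" "t < t1 + d" for t
    using lip[of t t1] that by auto
  have fast: "4 - 2 * a < v * (t1 + d - t1) - \<bar>Z (t1 + d) - Z t1\<bar>"
    if "\<bar>Z (t1 + d) - Z t1\<bar> \<le> d" for Z :: "real \<Rightarrow> real"
    using that a d by simp
  have a2: "a \<le> 2" and lohi: "t1 < t1 + d" using a d by simp_all
  from assms(7) show ?thesis
  proof
    assume "fst (ray x0 y0 t0 \<alpha> t1) \<notin> {a - d..1 - (a - d)}"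
    then have "X t1 \<notin> {a - d..1 - (a - d)}" by (simp add: X_def)
    then have "(\<forall>t. t1 < t \<and> t < t1 + d \<longrightarrow> X t < a) \<or> (\<forall>t. t1 < t \<and> t < t1 + d \<longrightarrow> 1 - a < X t)"
      using near_wall_after_exit[where Z = X] close(1) by blast
    moreover have "4 - 2 * a < v * (t1 + d - t1) - \<bar>Y (t1 + d) - Y t1\<bar>"
      by (rule fast) (use lip(2)[of "t1 + d" t1] d in simp)
    ultimately show ?thesis
      by (rule ray_caught_near_vertical_wall[OF XY a(1) a2 t1(1) lohi t1(2)])
  next
    assume "snd (ray x0 y0 t0 \<alpha> t1) \<notin> {a - d..1 - (a - d)}"
    then have "Y t1 \<notin> {a - d..1 - (a - d)}" by (simp add: Y_def)
    then have "(\<forall>t. t1 < t \<and> t < t1 + d \<longrightarrow> Y t < a) \<or> (\<forall>t. t1 < t \<and> t < t1 + d \<longrightarrow> 1 - a < Y t)"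
      using near_wall_after_exit[where Z = Y] close(2) by blast
    moreover have "4 - 2 * a < v * (t1 + d - t1) - \<bar>X (t1 + d) - X t1\<bar>"
      by (rule fast) (use lip(1)[of "t1 + d" t1] d in simp)
    ultimately show ?thesis
      by (rule ray_caught_near_horizontal_wall[OF XY a(1) a2 t1(1) lohi t1(2)])
  qed
qed

lemma tGCC_eventually_at_top:
  assumes a: "0 < a" "a < 1/2" and \<epsilon>: "0 < \<epsilon>"
  shows "\<forall>\<^sub>F v in at_top. tGCC v a (sqrt 2 * (1 - 2 * a) + \<epsilon>)"
proof -
  define d where "d = min (a / 2) (\<epsilon> / 5)"
  have d: "0 < d" "d \<le> a / 2" "d \<le> \<epsilon> / 5" using a \<epsilon> unfolding d_def by auto
  have "sqrt 2 \<le> 3/2" by (rule real_le_lsqrt) (auto simp: power2_eq_square)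
  then have "d * (2 * sqrt 2) \<le> d * 3" using d(1) by (intro mult_left_mono) auto
  moreover have "d + sqrt 2 * (1 - 2 * (a - d)) + d = sqrt 2 * (1 - 2 * a) + d * (2 * sqrt 2) + 2 * d"
    by (simp add: algebra_simps)
  ultimately have len: "d + sqrt 2 * (1 - 2 * (a - d)) + d \<le> sqrt 2 * (1 - 2 * a) + \<epsilon>"
    using d by linarith
  have exit: "0 < a - d" "0 \<le> d + sqrt 2 * (1 - 2 * (a - d))" using a d by simp_all
  have "tGCC v a (sqrt 2 * (1 - 2 * a) + \<epsilon>)" if v: "1 + 4 / d \<le> v" for v
    unfolding tGCC_def
  proof (intro allI impI)
    fix x0 y0 t0 \<alpha> :: real
    have "(1 + 4 / d) * d \<le> v * d" using v d by (intro mult_right_mono) auto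
    moreover have "(1 + 4 / d) * d = 4 + d" using d by (simp add: field_simps)
    ultimately have "4 + d \<le> v * d" by simp
    moreover obtain t1 where "0 \<le> t1" "t1 \<le> d + sqrt 2 * (1 - 2 * (a - d))"
      "fst (ray x0 y0 t0 \<alpha> t1) \<notin> {a - d..1 - (a - d)} \<or> snd (ray x0 y0 t0 \<alpha> t1) \<notin> {a - d..1 - (a - d)}"
      using ray_leaves_central_square[OF exit, of x0 y0 t0 \<alpha>] d by auto
    ultimately show "\<exists>t. 0 < t \<and> t < sqrt 2 * (1 - 2 * a) + \<epsilon> \<and> ray x0 y0 t0 \<alpha> t \<in> omega v a t"
      using len by (intro ray_caught_soon_after_leaving[OF a d(1)]) auto
  qed
  then show ?thesis by (rule eventually_mono[OF eventually_ge_at_top[of "1 + 4 / d"]])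
qed

section \<open>The minimal control time\<close>

lemma T0_le: "0 < T \<Longrightarrow> tGCC v a T \<Longrightarrow> T0 v a \<le> ereal T"
  unfolding T0_def by (rule Inf_lower) auto

lemma T0_ge_diagonal:
  assumes "0 < a" "a < 1/2"
  shows "ereal (sqrt 2 * (1 - 2 * a)) \<le> T0 v a"
  unfolding T0_def
  by (rule Inf_greatest) (auto dest: tGCC_time_gt_diagonal[OF assms] intro: less_imp_le)

lemma T0_eq_infinity_if_ray_escapes:
  assumes "0 \<le> x0" "x0 \<le> 1" "0 \<le> y0" "y0 \<le> 1" "-pi < \<alpha>" "\<alpha> \<le> pi"
    and "\<And>t. 0 < t \<Longrightarrow> ray x0 y0 t0 \<alpha> t \<notin> omega v a t"
  shows "T0 v a = \<infinity>"
proof -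
  have "{T. 0 < T \<and> tGCC v a T} = {}"
    using assms unfolding tGCC_def by blast
  then show ?thesis unfolding T0_def by (simp only: image_empty Inf_empty top_ereal_def)
qed

lemma T0_finite_above_critical_speed:
  assumes "0 < a" "a < 1/2" "(2 - a) / a < v"
  shows "T0 v a < \<infinity>"
proof -
  obtain T where "0 < T" "tGCC v a T" using tGCC_above_critical_speed[OF assms] by blast
  then have "T0 v a \<le> ereal T" by (rule T0_le)
  also have "\<dots> < \<infinity>" by simp
  finally show ?thesis .
qed

lemma T0_tendsto_diagonal:
  assumes a: "0 < a" "a < 1/2"
  shows "((\<lambda>v. T0 v a) \<longlongrightarrow> ereal (sqrt 2 * (1 - 2 * a))) at_top"
proof (rule order_tendstoI)
  fix y assume "y < ereal (sqrt 2 * (1 - 2 * a))"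
  then show "\<forall>\<^sub>F v in at_top. y < T0 v a"
    using T0_ge_diagonal[OF a] by (auto intro: always_eventually less_le_trans)
next
  fix y assume "ereal (sqrt 2 * (1 - 2 * a)) < y"
  then obtain r where r: "sqrt 2 * (1 - 2 * a) < r" "ereal r < y"
    using ereal_dense2 by force
  have "0 < sqrt 2 * (1 - 2 * a)" using a by simp
  then have "0 < r" using r(1) by linarith
  have "\<forall>\<^sub>F v in at_top. tGCC v a (sqrt 2 * (1 - 2 * a) + (r - sqrt 2 * (1 - 2 * a)))"
    using r(1) by (intro tGCC_eventually_at_top a) simp
  then show "\<forall>\<^sub>F v in at_top. T0 v a < y"
    by (rule eventually_mono) (use T0_le[OF \<open>0 < r\<close>] r(2) in \<open>auto intro: le_less_trans\<close>)
qed

section \<open>Rational speeds\<close>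

lemma sqrt_2_not_rat: "sqrt 2 \<notin> \<rat>"
proof
  assume "sqrt 2 \<in> \<rat>"
  then obtain m n :: nat where n: "n \<noteq> 0" and sq: "\<bar>sqrt 2\<bar> = real m / real n" and "coprime m n"
    by (rule Rats_abs_nat_div_natE)
  then have "real m = sqrt 2 * real n" by (simp add: field_simps)
  then have "real (m\<^sup>2) = real (2 * n\<^sup>2)" by (simp add: power_mult_distrib)
  then have eq: "m\<^sup>2 = 2 * n\<^sup>2" by (simp only: of_nat_eq_iff)
  then have "even (m\<^sup>2)" by simp
  then have "even m" by simp
  then obtain k where "m = 2 * k" by blast
  with eq have "n\<^sup>2 = 2 * k\<^sup>2" by (simp add: power_mult_distrib)
  then have "even (n\<^sup>2)" by simp
  then have "even n" by simp
  with \<open>even m\<close> \<open>coprime m n\<close> show False by auto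
qed

lemma continuous_periodic_pos_bounded_below:
  fixes f :: "real \<Rightarrow> real"
  assumes "continuous_on UNIV f" "0 < P" and periodic: "\<And>t k. f (t + real_of_int k * P) = f t"
    and "\<And>t. 0 < f t"
  shows "\<exists>d>0. \<forall>t. d \<le> f t"
proof -
  have "{0..P} \<noteq> {}" "continuous_on {0..P} f"
    using assms(1,2) continuous_on_subset by auto
  then obtain tm where tm: "\<forall>t\<in>{0..P}. f tm \<le> f t"
    using continuous_attains_inf[of "{0..P}" f] by auto
  have "f tm \<le> f t" for t
  proof -
    define k where "k = \<lfloor>t / P\<rfloor>"
    have "real_of_int k \<le> t / P" "t / P < real_of_int k + 1" unfolding k_def by linarith+
    then have "t - real_of_int k * P \<in> {0..P}" using assms(2) by (simp add: field_simps)
    then have "f tm \<le> f (t - real_of_int k * P)" using tm by blast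
    also have "\<dots> = f t" using periodic[of "t - real_of_int k * P" k] by simp
    finally show ?thesis .
  qed
  then show ?thesis using assms(4)[of tm] by blast
qed

lemma linf_dist_pos: "z \<noteq> w \<Longrightarrow> 0 < linf_dist z w"
  unfolding linf_dist_def by (cases z, cases w) auto

lemma half_notin_Ints: "(1/2 :: real) \<notin> \<int>"
proof
  assume "(1/2 :: real) \<in> \<int>"
  then obtain k where "real_of_int k = 1/2" by (auto elim: Ints_cases)
  then have "real_of_int (2 * k) = 1" by simp
  then show False by presburger
qed

lemma rational_ray_misses_bdry_point:
  fixes p q :: nat
  assumes n: "0 < n" "n\<^sup>2 = real (p\<^sup>2 + q\<^sup>2)" and r: "r \<in> \<rat>" and v: "v = n * r" "v \<noteq> 0"
    and \<alpha>: "cos \<alpha> = real p / n" "sin \<alpha> = real q / n"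
  shows "ray (1/2) (1/2) (sqrt 2 / v) \<alpha> t \<noteq> bdry_point (v * t)"
proof
  assume eq: "ray (1/2) (1/2) (sqrt 2 / v) \<alpha> t = bdry_point (v * t)"
  define \<theta> where "\<theta> = (t - sqrt 2 / v) / n"
  have coords: "ray (1/2) (1/2) (sqrt 2 / v) \<alpha> t = (tri (1/2 + \<theta> * real p), tri (1/2 + \<theta> * real q))"
    unfolding ray_def \<alpha> \<theta>_def using n by simp
  \<comment> \<open>hitting the boundary makes the ray parameter rational, and then \<open>v t \<in> \<surd>2 + \<rat>\<close> would be rational\<close>
  have "\<theta> \<in> \<rat>"
  proof -
    obtain m where m: "m \<in> {p, q}" "tri (1/2 + \<theta> * real m) \<in> {0, 1}"
      using bdry_point_on_boundary[of "v * t"] unfolding eq[symmetric] coords by auto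
    have z: "1/2 + \<theta> * real m \<in> \<int>" using m(2) by (rule Ints_if_tri_in_01)
    have "m \<noteq> 0"
    proof
      assume "m = 0"
      then show False using z half_notin_Ints by simp
    qed
    have "1/2 + \<theta> * real m \<in> \<rat>" using z Ints_subset_Rats by blast
    then have "\<theta> * real m \<in> \<rat>" using Rats_diff[of "1/2 + \<theta> * real m" "1/2"] by simp
    with \<open>m \<noteq> 0\<close> show ?thesis using Rats_divide[of "\<theta> * real m" "real m"] by simp
  qed
  then have "fst (bdry_point (v * t)) \<in> \<rat>" "snd (bdry_point (v * t)) \<in> \<rat>"
    unfolding eq[symmetric] coords by (auto intro!: tri_Rats)
  then have "v * t \<in> \<rat>" by (rule Rats_if_bdry_point_Rats)
  have "n\<^sup>2 * r * (x / n) = n * r * x" for x using n(1) by (simp add: power2_eq_square)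
  then have "real (p\<^sup>2 + q\<^sup>2) * r * \<theta> = v * (t - sqrt 2 / v)"
    unfolding \<theta>_def n(2)[symmetric] v(1) by blast
  then have "sqrt 2 = v * t - real (p\<^sup>2 + q\<^sup>2) * r * \<theta>"
    using v(2) by (simp add: right_diff_distrib)
  moreover have "real (p\<^sup>2 + q\<^sup>2) * r * \<theta> \<in> \<rat>" using r \<open>\<theta> \<in> \<rat>\<close> by simp
  ultimately have "sqrt 2 \<in> \<rat>" using \<open>v * t \<in> \<rat>\<close> by (simp add: Rats_diff)
  then show False using sqrt_2_not_rat by simp
qed

lemma rational_ray_periodic:
  fixes p q :: nat and P Q :: int
  assumes n: "0 < n" "n\<^sup>2 = real (p\<^sup>2 + q\<^sup>2)" and v: "v = n * (real_of_int P / real_of_int Q)" "Q \<noteq> 0"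
    and \<alpha>: "cos \<alpha> = real p / n" "sin \<alpha> = real q / n"
  shows "ray x0 y0 t0 \<alpha> (t + real_of_int k * (4 * n * real_of_int Q)) = ray x0 y0 t0 \<alpha> t"
    and "bdry_point (v * (t + real_of_int k * (4 * n * real_of_int Q))) = bdry_point (v * t)"
proof -
  have shift: "u + (t + real_of_int k * (4 * n * real_of_int Q) - t0) * (real m / n)
      = (u + (t - t0) * (real m / n)) + 2 * real_of_int (2 * k * Q * int m)" for u and m :: nat
    using n by (simp add: field_simps)
  show "ray x0 y0 t0 \<alpha> (t + real_of_int k * (4 * n * real_of_int Q)) = ray x0 y0 t0 \<alpha> t"
    unfolding ray_def \<alpha> shift tri_periodic ..
  have "v * (real_of_int k * (4 * n * real_of_int Q)) = 4 * real_of_int k * n\<^sup>2 * real_of_int P"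
    using v by (simp add: power2_eq_square)
  also have "\<dots> = 4 * real_of_int (k * int (p\<^sup>2 + q\<^sup>2) * P)"
    unfolding n(2) by simp
  finally have shift_v: "v * (t + real_of_int k * (4 * n * real_of_int Q)) = v * t + 4 * real_of_int (k * int (p\<^sup>2 + q\<^sup>2) * P)"
    by (simp add: distrib_left)
  show "bdry_point (v * (t + real_of_int k * (4 * n * real_of_int Q))) = bdry_point (v * t)"
    unfolding shift_v by (rule bdry_point_periodic)
qed

lemma T0_infinite_for_rational_speed:
  fixes p q :: nat
  assumes "0 \<le> v" "r \<in> \<rat>" "v = sqrt (real (p\<^sup>2 + q\<^sup>2)) * r"
  shows "\<exists>a0>0. \<forall>a. 0 < a \<and> a < a0 \<longrightarrow> T0 v a = \<infinity>"
proof (cases "v = 0")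
  case True
  have "T0 v a = \<infinity>" if "0 < a" "a < 1/2" for a
  proof (rule T0_eq_infinity_if_ray_escapes[of 0 "1/2" 0 0])
    show "ray 0 (1/2) 0 0 t \<notin> omega v a t" for t
      using that True tri_abs[of "1/2"] bdry_point_base[of 0]
      unfolding ray_in_omega_iff linf_dist_def by (simp add: ray_def)
  qed auto
  then show ?thesis by (intro exI[of _ "1/2"]) auto
next
  case False
  define n where "n = sqrt (real (p\<^sup>2 + q\<^sup>2))"
  have n2: "n\<^sup>2 = real (p\<^sup>2 + q\<^sup>2)" unfolding n_def by simp
  have v: "v = n * r" unfolding n_def assms(3) ..
  then have "n \<noteq> 0" using False by auto
  moreover have "0 \<le> n" unfolding n_def by simp
  ultimately have n: "0 < n" by simp
  obtain P Q where Q: "0 < Q" and r: "r = real_of_int P / real_of_int Q"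
    using Rats_cases'[OF assms(2)] by metis
  have "(real p / n)\<^sup>2 + (real q / n)\<^sup>2 = real (p\<^sup>2 + q\<^sup>2) / n\<^sup>2"
    by (simp add: power_divide add_divide_distrib)
  also have "\<dots> = 1" unfolding n2[symmetric] using n by simp
  finally have "(real p / n)\<^sup>2 + (real q / n)\<^sup>2 = 1" .
  then obtain \<alpha> where \<alpha>: "0 \<le> \<alpha>" "\<alpha> \<le> pi" "cos \<alpha> = real p / n" "sin \<alpha> = real q / n"
    using sincos_total_pi[of "real q / n" "real p / n"] n by auto
  define D where "D t = linf_dist (ray (1/2) (1/2) (sqrt 2 / v) \<alpha> t) (bdry_point (v * t))" for t
  have "\<exists>d>0. \<forall>t. d \<le> D t"
  proof (rule continuous_periodic_pos_bounded_below)
    show "continuous_on UNIV D"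
      unfolding D_def linf_dist_def bdry_point_eq_wave by (intro continuous_intros)
    show "0 < 4 * n * real_of_int Q" using n Q by simp
    show "D (t + real_of_int k * (4 * n * real_of_int Q)) = D t" for t k
      unfolding D_def using rational_ray_periodic[OF n n2 _ _ \<alpha>(3,4), of v P Q] r v Q by simp
    show "0 < D t" for t
      unfolding D_def
      by (rule linf_dist_pos, rule rational_ray_misses_bdry_point[OF n n2 assms(2) _ False \<alpha>(3,4)])
        (rule v)
  qed
  then obtain d where d: "0 < d" "\<And>t. d \<le> D t" by blast
  have "-pi < \<alpha>" using \<alpha>(1) pi_gt_zero by linarith
  have "T0 v a = \<infinity>" if "0 < a" "a < d" for a
  proof (rule T0_eq_infinity_if_ray_escapes[of "1/2" "1/2" \<alpha> "sqrt 2 / v"])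
    show "ray (1/2) (1/2) (sqrt 2 / v) \<alpha> t \<notin> omega v a t" for t
      using d(2)[of t] that unfolding ray_in_omega_iff D_def by simp
  qed (use \<alpha> \<open>-pi < \<alpha>\<close> in auto)
  then show ?thesis using d(1) by blast
qed

theorem proposition3p4:
  shows "(\<forall>a. 0 < a \<and> a < 1/2 \<longrightarrow>
            (\<forall>v. v > (2 - a) / a \<longrightarrow> T0 v a < \<infinity>) \<and>
            ((\<lambda>v. T0 v a) \<longlongrightarrow> ereal (max (sqrt 2 * (1 - 2 * a)) 0)) at_top)
       \<and> (\<forall>v (p::nat) (q::nat) r. 0 \<le> v \<and> r \<in> \<rat> \<and> v = sqrt (real (p^2 + q^2)) * r \<longrightarrow>
            (\<exists>a0>0. \<forall>a. 0 < a \<and> a < a0 \<longrightarrow> T0 v a = \<infinity>))"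
proof (intro conjI allI impI)
  fix a v :: real
  assume "0 < a \<and> a < 1/2" "v > (2 - a) / a"
  then show "T0 v a < \<infinity>" by (intro T0_finite_above_critical_speed) auto
next
  fix a :: real
  assume a: "0 < a \<and> a < 1/2"
  then have "max (sqrt 2 * (1 - 2 * a)) 0 = sqrt 2 * (1 - 2 * a)" by simp
  then show "((\<lambda>v. T0 v a) \<longlongrightarrow> ereal (max (sqrt 2 * (1 - 2 * a)) 0)) at_top"
    using T0_tendsto_diagonal[of a] a by simp
next
  fix v r :: real and p q :: nat
  assume "0 \<le> v \<and> r \<in> \<rat> \<and> v = sqrt (real (p^2 + q^2)) * r"
  then show "\<exists>a0>0. \<forall>a. 0 < a \<and> a < a0 \<longrightarrow> T0 v a = \<infinity>"
    by (intro T0_infinite_for_rational_speed) auto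
qed

end
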